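(* Let $P$ be an $L$-dcpo and $x\in P$. If there exists a directed $L$-subset $D\in L^P$ such that $D\le k(x)$ and $\sqcup D=x$, then $k(x)$ is directed and $x=\sqcup k(x)$.
   Context: $L$ is a frame with implication $\to$. $L$-order $e$ on $P$: $e(x,x)=1$, $e(x,y)\wedge e(y,z)\le e(x,z)$, $e(x,y)\wedge e(y,x)=1\Rightarrow x=y$. ${\rm sub}_P(A,B)=\bigwedge_xA(x)\to B(x)$; ${\downarrow}y(x)=e(x,y)$; $\sqcup A=x$ iff $e(x,y)={\rm sub}_P(A,{\downarrow}y)$ for all $y$. Directed: $\bigvee_xD(x)=1$ and $D(x)\wedge D(y)\le\bigvee_zD(z)\wedge e(x,z)\wedge e(y,z)$; ideal: directed lower set ($I(x)\wedge e(y,x)\le I(y)$); $L$-dcpo: every directed $L$-subset has a supremum. ${\Downarrow}x(y)=\bigwedge\{e(x,\sqcup I)\to I(y):I\text{ ideal of }P\}$. $K(P)=\{x:{\Downarrow}x(x)=1\}$; $k(x)\in L^P$ is $k(x)(y)=e(y,x)$ for $y\in K(P)$ and $0$ otherwise. $D\le k(x)$ is pointwise. *)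

theory Defs
  imports Main
begin

text \<open>The frame L is a type 'l of class complete_lattice satisfying the frame law
  (finite meets distribute over arbitrary joins); implication is the Heyting
  implication (right adjoint of meet).\<close>

definition frame_law :: "'l::complete_lattice itself \<Rightarrow> bool" where
  "frame_law _ \<longleftrightarrow> (\<forall>(a::'l) B. inf a (Sup B) = (SUP b\<in>B. inf a b))"

definition limp :: "'l::complete_lattice \<Rightarrow> 'l \<Rightarrow> 'l" where
  "limp a b = Sup {c. inf c a \<le> b}"

text \<open>L-order e on P (P is the whole type 'a).\<close>
definition L_order :: "('a \<Rightarrow> 'a \<Rightarrow> 'l::complete_lattice) \<Rightarrow> bool" where
  "L_order e \<longleftrightarrow> (\<forall>x. e x x = top)
     \<and> (\<forall>x y z. inf (e x y) (e y z) \<le> e x z)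
     \<and> (\<forall>x y. inf (e x y) (e y x) = top \<longrightarrow> x = y)"

definition subP :: "('a \<Rightarrow> 'l::complete_lattice) \<Rightarrow> ('a \<Rightarrow> 'l) \<Rightarrow> 'l" where
  "subP A B = (INF x. limp (A x) (B x))"

definition ldown :: "('a \<Rightarrow> 'a \<Rightarrow> 'l::complete_lattice) \<Rightarrow> 'a \<Rightarrow> 'a \<Rightarrow> 'l" where
  "ldown e y = (\<lambda>x. e x y)"

definition is_lsup :: "('a \<Rightarrow> 'a \<Rightarrow> 'l::complete_lattice) \<Rightarrow> ('a \<Rightarrow> 'l) \<Rightarrow> 'a \<Rightarrow> bool" where
  "is_lsup e A x \<longleftrightarrow> (\<forall>y. e x y = subP A (ldown e y))"

definition lsup :: "('a \<Rightarrow> 'a \<Rightarrow> 'l::complete_lattice) \<Rightarrow> ('a \<Rightarrow> 'l) \<Rightarrow> 'a" where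
  "lsup e A = (THE x. is_lsup e A x)"

definition ldirected :: "('a \<Rightarrow> 'a \<Rightarrow> 'l::complete_lattice) \<Rightarrow> ('a \<Rightarrow> 'l) \<Rightarrow> bool" where
  "ldirected e D \<longleftrightarrow> (SUP x. D x) = top
     \<and> (\<forall>x y. inf (D x) (D y) \<le> (SUP z. inf (D z) (inf (e x z) (e y z))))"

definition lideal :: "('a \<Rightarrow> 'a \<Rightarrow> 'l::complete_lattice) \<Rightarrow> ('a \<Rightarrow> 'l) \<Rightarrow> bool" where
  "lideal e I \<longleftrightarrow> ldirected e I \<and> (\<forall>x y. inf (I x) (e y x) \<le> I y)"

definition L_dcpo :: "('a \<Rightarrow> 'a \<Rightarrow> 'l::complete_lattice) \<Rightarrow> bool" where
  "L_dcpo e \<longleftrightarrow> L_order e \<and> (\<forall>D. ldirected e D \<longrightarrow> (\<exists>x. is_lsup e D x))"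

text \<open>wbelow e x y is the value of the L-subset \<Down>x at y.\<close>
definition wbelow :: "('a \<Rightarrow> 'a \<Rightarrow> 'l::complete_lattice) \<Rightarrow> 'a \<Rightarrow> 'a \<Rightarrow> 'l" where
  "wbelow e x y = (INF I\<in>{I. lideal e I}. limp (e x (lsup e I)) (I y))"

definition compacts :: "('a \<Rightarrow> 'a \<Rightarrow> 'l::complete_lattice) \<Rightarrow> 'a set" where
  "compacts e = {x. wbelow e x x = top}"

definition kset :: "('a \<Rightarrow> 'a \<Rightarrow> 'l::complete_lattice) \<Rightarrow> 'a \<Rightarrow> 'a \<Rightarrow> 'l" where
  "kset e x = (\<lambda>y. if y \<in> compacts e then e y x else bot)"

end

theory Submission
  imports Defs
begin

text \<open>Let \<open>I\<close> be the lower closure of \<open>D\<close>. It is an ideal with supremum \<open>x\<close>, so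
  \<open>e a x \<le> I a\<close> for every compact \<open>a\<close>; hence \<open>D \<le> k(x) \<le> I\<close>. Every \<open>L\<close>-subset squeezed
  between a directed \<open>D\<close> and its lower closure is directed, and every \<open>L\<close>-subset squeezed
  between \<open>D\<close> and \<open>\<down>x\<close> has the same supremum \<open>x\<close> as \<open>D\<close>.\<close>

lemma frame_inf_SUP:
  assumes "frame_law TYPE('l::complete_lattice)"
  shows "inf (a::'l) (SUP i. f i) = (SUP i. inf a (f i))"
  using assms unfolding frame_law_def by (metis image_image)

lemma frame_SUP_inf:
  assumes "frame_law TYPE('l::complete_lattice)"
  shows "inf (SUP i. f i) (a::'l) = (SUP i. inf (f i) a)"
  using frame_inf_SUP[OF assms, of a f] by (simp add: inf_commute)

lemma frame_SUP_inf_SUP: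
  assumes "frame_law TYPE('l::complete_lattice)"
  shows "inf (SUP i. f i) (SUP j. g j) = (SUP i. SUP j. inf (f i) (g j :: 'l))"
  unfolding frame_SUP_inf[OF assms] by (simp only: frame_inf_SUP[OF assms])

lemma le_limp_iff:
  assumes "frame_law TYPE('l::complete_lattice)"
  shows "c \<le> limp a b \<longleftrightarrow> inf c a \<le> (b::'l)"
proof
  assume "c \<le> limp a b"
  then have "inf c a \<le> inf (Sup {c. inf c a \<le> b}) a"
    unfolding limp_def by (rule inf_mono) simp
  also have "\<dots> = (SUP c\<in>{c. inf c a \<le> b}. inf c a)"
    using assms unfolding frame_law_def by (simp add: inf_commute)
  also have "\<dots> \<le> b" by (rule SUP_least) simp
  finally show "inf c a \<le> b" .
next
  assume "inf c a \<le> b"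
  then show "c \<le> limp a b" unfolding limp_def by (rule Sup_upper[OF CollectI])
qed

lemma le_subP_iff:
  assumes "frame_law TYPE('l::complete_lattice)"
  shows "c \<le> subP A B \<longleftrightarrow> (\<forall>x. inf c (A x) \<le> (B x :: 'l))"
  unfolding subP_def le_INF_iff le_limp_iff[OF assms] by simp

lemma subP_antimono: "A \<le> A' \<Longrightarrow> subP A' B \<le> subP A B"
  unfolding subP_def limp_def le_fun_def
  by (intro INF_mono' Sup_subset_mono) (auto intro: order_trans[OF inf_mono])

lemma L_order_refl: "L_order e \<Longrightarrow> e x x = top"
  unfolding L_order_def by blast

lemma L_order_trans: "L_order e \<Longrightarrow> inf (e x y) (e y z) \<le> e x z"
  unfolding L_order_def by blast

lemma is_lsup_unique:
  assumes "L_order e" "is_lsup e A x" "is_lsup e A x'"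
  shows "x = x'"
proof -
  have "e x x' = e x' x'" "e x' x = e x x"
    using assms(2,3) unfolding is_lsup_def by metis+
  then show ?thesis
    using assms(1) unfolding L_order_def by (metis inf_top.right_neutral)
qed

lemma lsup_eq: "L_order e \<Longrightarrow> is_lsup e A x \<Longrightarrow> lsup e A = x"
  unfolding lsup_def by (blast intro: is_lsup_unique)

lemma is_lsup_upper:
  assumes "frame_law TYPE('l::complete_lattice)" "L_order (e :: 'a \<Rightarrow> 'a \<Rightarrow> 'l)"
    and "is_lsup e A x"
  shows "A \<le> ldown e x"
proof -
  have "subP A (ldown e x) = e x x" using assms(3) unfolding is_lsup_def by simp
  then have "top \<le> subP A (ldown e x)" by (simp add: L_order_refl[OF assms(2)])
  then show ?thesis by (simp add: le_subP_iff[OF assms(1)] le_fun_def)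
qed

lemma is_lsup_squeeze:
  assumes "frame_law TYPE('l::complete_lattice)" "L_order (e :: 'a \<Rightarrow> 'a \<Rightarrow> 'l)"
    and "is_lsup e D x" "D \<le> A" "A \<le> ldown e x"
  shows "is_lsup e A x"
  unfolding is_lsup_def
proof
  fix y
  have "subP A (ldown e y) \<le> subP D (ldown e y)" using assms(4) by (rule subP_antimono)
  also have "\<dots> = e x y" using assms(3) unfolding is_lsup_def by simp
  finally have "subP A (ldown e y) \<le> e x y" .
  moreover have "e x y \<le> subP A (ldown e y)"
    unfolding le_subP_iff[OF assms(1)]
  proof
    fix w
    have "A w \<le> e w x" using assms(5) by (simp add: le_fun_def ldown_def)
    then have "inf (e x y) (A w) \<le> inf (e w x) (e x y)" by (auto intro: le_infI2)
    also have "\<dots> \<le> e w y" by (rule L_order_trans[OF assms(2)])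
    finally show "inf (e x y) (A w) \<le> ldown e y w" by (simp add: ldown_def)
  qed
  ultimately show "e x y = subP A (ldown e y)" by simp
qed

definition ldown_closure :: "('a \<Rightarrow> 'a \<Rightarrow> 'l::complete_lattice) \<Rightarrow> ('a \<Rightarrow> 'l) \<Rightarrow> 'a \<Rightarrow> 'l" where
  "ldown_closure e D = (\<lambda>w. SUP d. inf (D d) (e w d))"

lemma le_ldown_closure: "L_order e \<Longrightarrow> D \<le> ldown_closure e D"
  unfolding ldown_closure_def le_fun_def
  by (metis L_order_refl SUP_upper2 UNIV_I inf_top.right_neutral order_refl)

lemma ldown_closure_le_ldown:
  assumes "L_order e" "D \<le> ldown e x"
  shows "ldown_closure e D \<le> ldown e x"
  unfolding ldown_closure_def le_fun_def ldown_def
proof (intro allI SUP_least)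
  fix w d
  have "D d \<le> e d x" using assms(2) by (simp add: le_fun_def ldown_def)
  then have "inf (D d) (e w d) \<le> inf (e w d) (e d x)" by (auto intro: le_infI1)
  also have "\<dots> \<le> e w x" by (rule L_order_trans[OF assms(1)])
  finally show "inf (D d) (e w d) \<le> e w x" .
qed

lemma ldown_closure_lower:
  assumes "frame_law TYPE('l::complete_lattice)" "L_order (e :: 'a \<Rightarrow> 'a \<Rightarrow> 'l)"
  shows "inf (ldown_closure e D a) (e b a) \<le> ldown_closure e D b"
  unfolding ldown_closure_def frame_SUP_inf[OF assms(1)]
proof (rule SUP_mono')
  fix d
  have "inf (inf (D d) (e a d)) (e b a) = inf (D d) (inf (e b a) (e a d))"
    by (simp add: inf_aci)
  also have "\<dots> \<le> inf (D d) (e b d)"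
    by (intro inf_mono order_refl L_order_trans[OF assms(2)])
  finally show "inf (inf (D d) (e a d)) (e b a) \<le> inf (D d) (e b d)" .
qed

text \<open>Directedness of \<open>D\<close> gives common upper bounds \<open>w\<close> of \<open>d\<^sub>1, d\<^sub>2\<close> in \<open>D\<close>;
  transitivity lifts \<open>e a d\<^sub>1\<close> and \<open>e b d\<^sub>2\<close> to \<open>e a w\<close> and \<open>e b w\<close>.\<close>

lemma ldown_closure_inf_le:
  assumes "frame_law TYPE('l::complete_lattice)" "L_order (e :: 'a \<Rightarrow> 'a \<Rightarrow> 'l)"
    and "ldirected e D"
  shows "inf (ldown_closure e D a) (ldown_closure e D b)
    \<le> (SUP w. inf (D w) (inf (e a w) (e b w)))"
  unfolding ldown_closure_def frame_SUP_inf_SUP[OF assms(1)]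
proof (intro SUP_least)
  fix d1 d2
  have "inf (inf (D d1) (e a d1)) (inf (D d2) (e b d2))
      \<le> inf (inf (D d1) (D d2)) (inf (e a d1) (e b d2))"
    by (simp add: inf_aci)
  also have "\<dots> \<le> inf (SUP w. inf (D w) (inf (e d1 w) (e d2 w))) (inf (e a d1) (e b d2))"
    using assms(3) unfolding ldirected_def by (blast intro: inf_mono)
  also have "\<dots> = (SUP w. inf (inf (D w) (inf (e d1 w) (e d2 w))) (inf (e a d1) (e b d2)))"
    by (rule frame_SUP_inf[OF assms(1)])
  also have "\<dots> \<le> (SUP w. inf (D w) (inf (e a w) (e b w)))"
  proof (rule SUP_mono')
    fix w
    have "inf (inf (D w) (inf (e d1 w) (e d2 w))) (inf (e a d1) (e b d2))
        = inf (D w) (inf (inf (e a d1) (e d1 w)) (inf (e b d2) (e d2 w)))"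
      by (simp add: inf_aci)
    also have "\<dots> \<le> inf (D w) (inf (e a w) (e b w))"
      by (intro inf_mono order_refl L_order_trans[OF assms(2)])
    finally show "inf (inf (D w) (inf (e d1 w) (e d2 w))) (inf (e a d1) (e b d2))
        \<le> inf (D w) (inf (e a w) (e b w))" .
  qed
  finally show "inf (inf (D d1) (e a d1)) (inf (D d2) (e b d2))
      \<le> (SUP w. inf (D w) (inf (e a w) (e b w)))" .
qed

lemma ldirected_squeeze:
  assumes "frame_law TYPE('l::complete_lattice)" "L_order (e :: 'a \<Rightarrow> 'a \<Rightarrow> 'l)"
    and "ldirected e D" "D \<le> A" "A \<le> ldown_closure e D"
  shows "ldirected e A"
  unfolding ldirected_def
proof (intro conjI allI)
  have "(SUP w. D w) \<le> (SUP w. A w)"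
    using assms(4) by (simp add: le_fun_def SUP_mono')
  then show "(SUP w. A w) = top"
    using assms(3) unfolding ldirected_def by (simp add: top_unique)
next
  fix a b
  have "inf (A a) (A b) \<le> inf (ldown_closure e D a) (ldown_closure e D b)"
    using assms(5) by (intro inf_mono) (simp_all add: le_fun_def)
  also have "\<dots> \<le> (SUP w. inf (D w) (inf (e a w) (e b w)))"
    by (rule ldown_closure_inf_le[OF assms(1-3)])
  also have "\<dots> \<le> (SUP w. inf (A w) (inf (e a w) (e b w)))"
    using assms(4) by (intro SUP_mono' inf_mono order_refl) (simp add: le_fun_def)
  finally show "inf (A a) (A b) \<le> (SUP w. inf (A w) (inf (e a w) (e b w)))" .
qed

lemma lideal_ldown_closure:
  assumes "frame_law TYPE('l::complete_lattice)" "L_order (e :: 'a \<Rightarrow> 'a \<Rightarrow> 'l)"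
    and "ldirected e D"
  shows "lideal e (ldown_closure e D)"
  unfolding lideal_def
  using ldirected_squeeze[OF assms le_ldown_closure[OF assms(2)] order_refl]
    ldown_closure_lower[OF assms(1,2)]
  by blast

lemma compact_le_lideal:
  assumes "frame_law TYPE('l::complete_lattice)"
    and "a \<in> compacts e" "lideal e I"
  shows "e a (lsup e I) \<le> (I a :: 'l)"
proof -
  have "wbelow e a a \<le> limp (e a (lsup e I)) (I a)"
    unfolding wbelow_def using assms(3) by (intro INF_lower) simp
  then have "top \<le> limp (e a (lsup e I)) (I a)" using assms(2) by (simp add: compacts_def)
  then show ?thesis by (simp add: le_limp_iff[OF assms(1)])
qed

theorem lemma5p8:
  fixes e :: "'a \<Rightarrow> 'a \<Rightarrow> 'l::complete_lattice" and x :: 'a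
  assumes "frame_law TYPE('l)"
    and "L_dcpo e"
    and "\<exists>D. ldirected e D \<and> D \<le> kset e x \<and> is_lsup e D x"
  shows "ldirected e (kset e x) \<and> is_lsup e (kset e x) x"
proof -
  note frame = assms(1)
  have ord: "L_order e" using assms(2) unfolding L_dcpo_def by blast
  obtain D where dir: "ldirected e D" and D_le_k: "D \<le> kset e x" and sup: "is_lsup e D x"
    using assms(3) by blast
  have "ldown_closure e D \<le> ldown e x"
    by (rule ldown_closure_le_ldown[OF ord is_lsup_upper[OF frame ord sup]])
  then have "is_lsup e (ldown_closure e D) x"
    by (rule is_lsup_squeeze[OF frame ord sup le_ldown_closure[OF ord]])
  then have "lsup e (ldown_closure e D) = x" by (rule lsup_eq[OF ord])
  then have k_le_closure: "kset e x \<le> ldown_closure e D"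
    using compact_le_lideal[OF frame _ lideal_ldown_closure[OF frame ord dir]]
    by (auto simp: le_fun_def kset_def)
  have k_le_x: "kset e x \<le> ldown e x" by (simp add: le_fun_def kset_def ldown_def)
  show ?thesis
    using ldirected_squeeze[OF frame ord dir D_le_k k_le_closure]
      is_lsup_squeeze[OF frame ord sup D_le_k k_le_x] by blast
qed

end
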